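(* Let $h=H(s::a::b)$ and $\Upsilon\subseteq\{z,z\boxplus h\}$. Then $$G(\vdash x\boxplus h)_\ell=G(x,z\vdash x\boxplus h)_\ell=2^{-\ell},\qquad G(a,b,s,x^{\circledast\kappa h}\vdash x\boxplus h)=1,\qquad G(a,b,s,x,\Upsilon\vdash x\boxplus h)=1.$$
   Context: Hancke–Kuhn setting with security parameter $\ell$: secret $s$, counters $a,b$, public hash $H$ modeled as a random oracle (outputs indistinguishable from uniformly random, independent on distinct inputs), token $h=H(s::a::b)=h^{(0)}::h^{(1)}\in\mathbb{Z}_2^{2\ell}$; $x\in\mathbb{Z}_2^\ell$ is Victor's uniformly random challenge and $z\in\mathbb{Z}_2^\ell$ an attacker's challenge chosen independently of $x$. $(x\boxplus h)_i=h^{(x_i)}_i$. Kernel $\kappa h=\{i\mid h^{(0)}_i=h^{(1)}_i\}$; $x^{\circledast I}$ replaces bits $x_i$, $i\in I$, by a wildcard. $G(\Xi\vdash\Theta)$ is the guessing chance: maximal probability over randomized guessing procedures of outputting $\Theta$ on input $\Xi$, over the random values, as a sequence in $\ell$ considered up to negligible difference; $G(\vdash\Theta)=G(\emptyset\vdash\Theta)$. *)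

theory Defs
  imports "HOL-Probability.Probability" "HOL-Library.FuncSet"
begin

text \<open>Bit strings of length n (elements of Z_2^n); True encodes the bit 1.\<close>
definition bits :: "nat \<Rightarrow> bool list set" where
  "bits n = {xs. length xs = n}"

text \<open>The random oracle H for security parameter l: a uniformly random function from
  inputs s::a::b (with s, a, b of length l, concatenated) to outputs in Z_2^(2l).\<close>
definition oracles :: "nat \<Rightarrow> (bool list \<Rightarrow> bool list) set" where
  "oracles l = bits (3 * l) \<rightarrow>\<^sub>E bits (2 * l)"

record world =
  orc :: "bool list \<Rightarrow> bool list"
  sec :: "bool list"
  cta :: "bool list"
  ctb :: "bool list"
  chx :: "bool list"                  (* Victor's challenge x *)
  chz :: "bool list"                  (* attacker's challenge z *)

text \<open>The attacker's challenge z
  is drawn from an arbitrary kernel Z l depending only on the public data H, a, b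
  (hence independently of x and of s).\<close>
definition world_pmf ::
  "(nat \<Rightarrow> (bool list \<Rightarrow> bool list) \<Rightarrow> bool list \<Rightarrow> bool list \<Rightarrow> bool list pmf) \<Rightarrow> nat \<Rightarrow> world pmf" where
  "world_pmf Z l =
     pmf_of_set (oracles l) \<bind> (\<lambda>H.
     pmf_of_set (bits l) \<bind> (\<lambda>s.
     pmf_of_set (bits l) \<bind> (\<lambda>a.
     pmf_of_set (bits l) \<bind> (\<lambda>b.
     pmf_of_set (bits l) \<bind> (\<lambda>x.
     Z l H a b \<bind> (\<lambda>z.
     return_pmf \<lparr>orc = H, sec = s, cta = a, ctb = b, chx = x, chz = z\<rparr>))))))"

definition token :: "world \<Rightarrow> bool list" where
  "token w = orc w (sec w @ cta w @ ctb w)"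

definition boxplus :: "nat \<Rightarrow> bool list \<Rightarrow> bool list \<Rightarrow> bool list" where
  "boxplus l x h = map (\<lambda>i. if x ! i then h ! (l + i) else h ! i) [0..<l]"

definition kernel :: "nat \<Rightarrow> bool list \<Rightarrow> nat set" where
  "kernel l h = {i. i < l \<and> h ! i = h ! (l + i)}"

definition wild :: "bool list \<Rightarrow> nat set \<Rightarrow> bool option list" where
  "wild x I = map (\<lambda>i. if i \<in> I then None else Some (x ! i)) [0..<length x]"

definition guess_prob :: "'w pmf \<Rightarrow> ('w \<Rightarrow> 'v) \<Rightarrow> ('w \<Rightarrow> 't) \<Rightarrow> ('v \<Rightarrow> 't pmf) \<Rightarrow> real" where
  "guess_prob D V T g = measure_pmf.expectation D (\<lambda>w. pmf (g (V w)) (T w))"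

definition guess_chance :: "'w pmf \<Rightarrow> ('w \<Rightarrow> 'v) \<Rightarrow> ('w \<Rightarrow> 't) \<Rightarrow> real" where
  "guess_chance D V T = (SUP g. guess_prob D V T g)"

definition negligible :: "(nat \<Rightarrow> real) \<Rightarrow> bool" where
  "negligible f \<longleftrightarrow> (\<forall>c::nat. \<forall>\<^sub>F l in sequentially. \<bar>f l\<bar> \<le> inverse (real l ^ c))"

definition negl_eq :: "(nat \<Rightarrow> real) \<Rightarrow> (nat \<Rightarrow> real) \<Rightarrow> bool" where
  "negl_eq f g \<longleftrightarrow> negligible (\<lambda>l. f l - g l)"

end

(*
  Wildcards only sit in the kernel of h, where h^(0)_i = h^(1)_i, so every filling of them
  yields x \<boxplus> h; and with x, s, a, b and H in view the token is simply computed.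

  Without s the guesser sees at most H, x and z.  Fix H, a, b, x: whatever it outputs, the
  average over the uniform secret s of its success is at most max_y |{s. x \<boxplus> H(s::a::b) = y}| / 2^l.
  For a uniform random oracle a union bound over y and over t-sets of secrets shows that some
  such fibre has t elements with probability at most 2^l / t!.  Taking t = 2l + 4 bounds the
  guessing chance by (2l + 5) / 2^l, which is negligibly close to 2^-l.
*)

theory Submission
  imports Defs "HOL-Real_Asymp.Real_Asymp"
begin

lemma expectation_pmf_le_const:
  fixes f :: "'a \<Rightarrow> real"
  assumes "\<And>x. \<bar>f x\<bar> \<le> B" "\<And>x. x \<in> set_pmf M \<Longrightarrow> f x \<le> c"
  shows "measure_pmf.expectation M f \<le> c"
  by (rule measure_pmf.integral_le_const)
     (auto intro!: measure_pmf.integrable_const_bound[where B=B] AE_pmfI assms)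

lemma abs_expectation_pmf_le:
  fixes f :: "'a \<Rightarrow> real"
  assumes "\<And>x. \<bar>f x\<bar> \<le> B"
  shows "\<bar>measure_pmf.expectation M f\<bar> \<le> B"
proof -
  have "\<bar>measure_pmf.expectation M f\<bar> \<le> measure_pmf.expectation M (\<lambda>x. \<bar>f x\<bar>)"
    using integral_norm_bound[of M f] by simp
  also have "\<dots> \<le> B"
    by (rule expectation_pmf_le_const[where B=B]) (auto simp: assms)
  finally show ?thesis .
qed

lemma expectation_bind_pmf:
  fixes f :: "'b \<Rightarrow> real"
  assumes "\<And>y. \<bar>f y\<bar> \<le> B"
  shows "measure_pmf.expectation (bind_pmf M N) f
       = measure_pmf.expectation M (\<lambda>x. measure_pmf.expectation (N x) f)"
  unfolding measure_pmf_bind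
  by (rule integral_bind[where K="count_space UNIV" and B=B and B'=1])
     (auto simp: assms measure_pmf.emeasure_space_1 intro: measure_pmf_in_subprob_algebra)

lemma expectation_bind_pmf_le_const:
  fixes f :: "'b \<Rightarrow> real"
  assumes "\<And>y. \<bar>f y\<bar> \<le> B" "\<And>x. x \<in> set_pmf M \<Longrightarrow> measure_pmf.expectation (N x) f \<le> c"
  shows "measure_pmf.expectation (bind_pmf M N) f \<le> c"
  unfolding expectation_bind_pmf[OF assms(1)]
  by (rule expectation_pmf_le_const[where B=B]) (auto intro: abs_expectation_pmf_le assms)

lemma expectation_pmf_of_set_le:
  fixes f :: "'a \<Rightarrow> real"
  assumes "finite A" "A \<noteq> {}" "\<And>x. x \<in> A \<Longrightarrow> f x \<le> g x"
  shows "measure_pmf.expectation (pmf_of_set A) f \<le> measure_pmf.expectation (pmf_of_set A) g"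
  using assms by (simp add: integral_pmf_of_set divide_right_mono sum_mono)

lemma guess_prob_nonneg: "0 \<le> guess_prob D V T g"
  unfolding guess_prob_def by (simp add: integral_nonneg)

lemma guess_prob_le_1: "guess_prob D V T g \<le> 1"
  unfolding guess_prob_def by (rule expectation_pmf_le_const[where B=1]) (auto simp: pmf_le_1)

lemma bdd_above_guess_prob: "bdd_above (range (guess_prob D V T))"
  by (rule bdd_aboveI[of _ 1]) (auto intro: guess_prob_le_1)

lemma guess_prob_le_guess_chance: "guess_prob D V T g \<le> guess_chance D V T"
  unfolding guess_chance_def by (rule cSUP_upper[OF UNIV_I bdd_above_guess_prob])

lemma guess_chance_nonneg: "0 \<le> guess_chance D V T"
  using guess_prob_nonneg guess_prob_le_guess_chance by (rule order.trans)

lemma guess_chance_le: "(\<And>g. guess_prob D V T g \<le> c) \<Longrightarrow> guess_chance D V T \<le> c"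
  unfolding guess_chance_def by (rule cSUP_least) auto

lemma guess_chance_mono_view:
  assumes "\<And>w. V w = \<phi> (V' w)"
  shows "guess_chance D V T \<le> guess_chance D V' T"
proof (rule guess_chance_le)
  fix g
  have "guess_prob D V T g = guess_prob D V' T (g \<circ> \<phi>)"
    by (simp add: guess_prob_def assms)
  then show "guess_prob D V T g \<le> guess_chance D V' T"
    using guess_prob_le_guess_chance by metis
qed

lemma guess_chance_eq_1_if_determined:
  assumes "\<And>w. w \<in> set_pmf D \<Longrightarrow> T w = \<phi> (V w)"
  shows "guess_chance D V T = 1"
proof (rule antisym)
  show "guess_chance D V T \<le> 1"
    by (rule guess_chance_le) (rule guess_prob_le_1)
  have "guess_prob D V T (return_pmf \<circ> \<phi>) = measure_pmf.expectation D (\<lambda>w. 1)"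
    unfolding guess_prob_def by (intro integral_cong_AE AE_pmfI) (auto simp: assms)
  then show "1 \<le> guess_chance D V T"
    using guess_prob_le_guess_chance[of D V T "return_pmf \<circ> \<phi>"] by simp
qed

lemma card_bits: "card (bits n) = 2 ^ n"
  unfolding bits_def using card_lists_length_eq[of "UNIV :: bool set" n] by simp

lemma finite_bits [simp]: "finite (bits n)"
  unfolding bits_def using finite_lists_length_eq[of "UNIV :: bool set" n] by simp

lemma bits_nonempty [simp]: "bits n \<noteq> {}"
  using card_bits[of n] by force

lemma card_oracles: "card (oracles l) = (2 ^ (2 * l)) ^ (2 ^ (3 * l))"
  by (simp add: oracles_def card_PiE card_bits)

lemma finite_oracles [simp]: "finite (oracles l)"
  by (simp add: oracles_def finite_PiE)

lemma oracles_nonempty [simp]: "oracles l \<noteq> {}"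
  using card_oracles[of l] by force

lemma length_boxplus [simp]: "length (boxplus l x h) = l"
  by (simp add: boxplus_def)

lemma card_PiE_constrained:
  assumes "finite A" "U \<subseteq> A" "P \<subseteq> B"
  shows "card {f \<in> A \<rightarrow>\<^sub>E B. \<forall>u\<in>U. f u \<in> P} = card P ^ card U * card B ^ card (A - U)"
proof -
  have "{f \<in> A \<rightarrow>\<^sub>E B. \<forall>u\<in>U. f u \<in> P} = PiE A (\<lambda>u. if u \<in> U then P else B)"
  proof (intro set_eqI iffI)
    fix f assume "f \<in> {f \<in> A \<rightarrow>\<^sub>E B. \<forall>u\<in>U. f u \<in> P}"
    then show "f \<in> PiE A (\<lambda>u. if u \<in> U then P else B)"
      by (auto simp: PiE_iff)
  next
    fix f assume f: "f \<in> PiE A (\<lambda>u. if u \<in> U then P else B)"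
    have "f u \<in> P" if "u \<in> U" for u
      using PiE_mem[OF f, of u] that assms(2) by auto
    moreover have "f u \<in> B" if "u \<in> A" for u
      using PiE_mem[OF f, of u] that assms(3) by (auto split: if_splits)
    ultimately show "f \<in> {f \<in> A \<rightarrow>\<^sub>E B. \<forall>u\<in>U. f u \<in> P}"
      using f by (auto simp: PiE_iff)
  qed
  also have "card \<dots> = (\<Prod>u\<in>A. if u \<in> U then card P else card B)"
    using assms(1) by (auto simp: card_PiE intro: prod.cong)
  also have "\<dots> = card P ^ card U * card B ^ card (A - U)"
    using assms(1,2) by (simp add: prod.If_cases Int_absorb1 Diff_eq)
  finally show ?thesis .
qed

lemma card_boxplus_fibre: "card {h \<in> bits (2 * l). boxplus l x h = y} \<le> 2 ^ l"
proof -
  let ?F = "{h \<in> bits (2 * l). boxplus l x h = y}"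
  \<comment> \<open>h is determined by y together with the l bits of h that x \<boxplus> h does not read\<close>
  let ?unused = "\<lambda>h. map (\<lambda>i. h ! (if x ! i then i else l + i)) [0..<l]"
  have "inj_on ?unused ?F"
  proof (rule inj_onI)
    fix h h' assume h: "h \<in> ?F" and h': "h' \<in> ?F" and eq: "?unused h = ?unused h'"
    have halves: "h ! i = h' ! i \<and> h ! (l + i) = h' ! (l + i)" if "i < l" for i
    proof -
      have "boxplus l x h ! i = boxplus l x h' ! i"
        using h h' by simp
      moreover have "?unused h ! i = ?unused h' ! i"
        by (simp only: eq)
      ultimately show ?thesis
        using that by (cases "x ! i") (simp_all add: boxplus_def)
    qed
    show "h = h'"
    proof (rule nth_equalityI)
      show "length h = length h'"
        using h h' by (simp add: bits_def)
      fix j assume "j < length h"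
      then have "j < l \<or> (\<exists>i<l. j = l + i)"
        using h by (auto simp: bits_def intro: exI[of _ "j - l"])
      then show "h ! j = h' ! j"
        using halves by blast
    qed
  qed
  moreover have "?unused ` ?F \<subseteq> bits l"
    by (auto simp: bits_def)
  ultimately have "card ?F \<le> card (bits l)"
    by (intro card_inj_on_le) auto
  then show ?thesis
    by (simp add: card_bits)
qed

lemma card_oracles_fixing_fibre:
  assumes "U \<subseteq> bits (3 * l)"
  shows "card {H \<in> oracles l. \<forall>u\<in>U. boxplus l x (H u) = y} * (2 ^ l) ^ card U \<le> card (oracles l)"
proof -
  let ?F = "{h \<in> bits (2 * l). boxplus l x h = y}" and ?N = "card (bits (3 * l))"
  have U: "card U \<le> ?N" "finite U"
    using assms by (auto intro: card_mono finite_subset)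
  have "{H \<in> oracles l. \<forall>u\<in>U. boxplus l x (H u) = y}
      = {H \<in> bits (3 * l) \<rightarrow>\<^sub>E bits (2 * l). \<forall>u\<in>U. H u \<in> ?F}"
    using assms by (auto simp: oracles_def)
  then have "card {H \<in> oracles l. \<forall>u\<in>U. boxplus l x (H u) = y} = card ?F ^ card U * (2 ^ (2 * l)) ^ (?N - card U)"
    using card_PiE_constrained[OF finite_bits assms, of ?F "bits (2 * l)"] U
    by (simp add: card_bits card_Diff_subset assms)
  also have "\<dots> * (2 ^ l) ^ card U \<le> (2 ^ l) ^ card U * (2 ^ (2 * l)) ^ (?N - card U) * (2 ^ l) ^ card U"
    by (intro mult_right_mono power_mono card_boxplus_fibre) auto
  also have "\<dots> = (2 ^ (2 * l)) ^ card U * (2 ^ (2 * l)) ^ (?N - card U)"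
    by (simp add: power_mult_distrib[symmetric] mult_2 power_add)
  also have "\<dots> = (2 ^ (2 * l)) ^ ?N"
    using U by (simp flip: power_add)
  finally show ?thesis
    by (simp add: card_oracles card_bits)
qed

lemma four_power_le_fact: "(4 :: nat) ^ l \<le> fact (2 * l + 4)"
proof (induction l)
  case (Suc l)
  have "(4 :: nat) ^ l \<le> (2 * l + 5) * fact (2 * l + 4)"
    by (rule order.trans[OF Suc.IH]) simp
  then have "(4 :: nat) ^ Suc l \<le> (2 * l + 6) * ((2 * l + 5) * fact (2 * l + 4))"
    by (simp add: mult_le_mono)
  also have "\<dots> = fact (2 * Suc l + 4)"
    by (simp add: numeral_eq_Suc)
  finally show ?case .
qed simp

lemma card_oracles_fixing_secrets:
  assumes "T \<subseteq> bits l" "a \<in> bits l" "b \<in> bits l"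
  shows "card {H \<in> oracles l. \<forall>s\<in>T. boxplus l x (H (s @ a @ b)) = y} * (2 ^ l) ^ card T
           \<le> card (oracles l)"
proof -
  let ?U = "(\<lambda>s. s @ a @ b) ` T"
  have "card ?U = card T"
    by (simp add: card_image inj_on_def)
  moreover have "?U \<subseteq> bits (3 * l)"
    using assms by (auto simp: bits_def)
  moreover have "{H \<in> oracles l. \<forall>s\<in>T. boxplus l x (H (s @ a @ b)) = y}
      = {H \<in> oracles l. \<forall>u\<in>?U. boxplus l x (H u) = y}"
    by auto
  ultimately show ?thesis
    using card_oracles_fixing_fibre[of ?U l x y] by simp
qed

definition heavy_fibre :: "nat \<Rightarrow> nat \<Rightarrow> bool list \<Rightarrow> bool list \<Rightarrow> bool list \<Rightarrow> (bool list \<Rightarrow> bool list) \<Rightarrow> bool" where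
  "heavy_fibre l t a b x H \<longleftrightarrow> (\<exists>y. t \<le> card {s \<in> bits l. boxplus l x (H (s @ a @ b)) = y})"

lemma heavy_fibreE:
  assumes "heavy_fibre l t a b x H" "0 < t"
  obtains y T where "y \<in> bits l" "T \<subseteq> bits l" "card T = t" "\<forall>s\<in>T. boxplus l x (H (s @ a @ b)) = y"
proof -
  obtain y where "t \<le> card {s \<in> bits l. boxplus l x (H (s @ a @ b)) = y}"
    using assms(1) by (auto simp: heavy_fibre_def)
  then obtain T where T: "T \<subseteq> {s \<in> bits l. boxplus l x (H (s @ a @ b)) = y}" "card T = t"
    by (meson obtain_subset_with_card_n)
  then obtain s where "s \<in> T"
    using assms(2) by fastforce
  then have "y \<in> bits l"
    using T(1) by (auto simp: bits_def)
  with T that show ?thesis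
    by blast
qed

lemma card_heavy_fibre:
  assumes "0 < t" "a \<in> bits l" "b \<in> bits l"
  shows "card {H \<in> oracles l. heavy_fibre l t a b x H} * fact t \<le> 2 ^ l * card (oracles l)"
proof -
  define n :: nat where "n = 2 ^ l"
  define subsets where "subsets = {T. T \<subseteq> bits l \<and> card T = t}"
  define fixing where "fixing y T = {H \<in> oracles l. \<forall>s\<in>T. boxplus l x (H (s @ a @ b)) = y}" for y T
  let ?heavy = "{H \<in> oracles l. heavy_fibre l t a b x H}"
  have "?heavy \<subseteq> (\<Union>y\<in>bits l. \<Union>T\<in>subsets. fixing y T)"
    by (auto simp: subsets_def fixing_def elim!: heavy_fibreE[OF _ assms(1)])
  moreover have "finite subsets"
    by (rule finite_subset[of _ "Pow (bits l)"]) (auto simp: subsets_def)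
  moreover have "finite (fixing y T)" for y T
    by (simp add: fixing_def)
  ultimately have "card ?heavy \<le> card (\<Union>y\<in>bits l. \<Union>T\<in>subsets. fixing y T)"
    by (intro card_mono) auto
  also have "\<dots> \<le> (\<Sum>y\<in>bits l. card (\<Union>T\<in>subsets. fixing y T))"
    by (rule card_UN_le) simp
  also have "\<dots> \<le> (\<Sum>y\<in>bits l. \<Sum>T\<in>subsets. card (fixing y T))"
    using \<open>finite subsets\<close> by (intro sum_mono card_UN_le)
  finally have "card ?heavy * n ^ t \<le> (\<Sum>y\<in>bits l. \<Sum>T\<in>subsets. card (fixing y T)) * n ^ t"
    by (rule mult_le_mono1)
  also have "\<dots> = (\<Sum>y\<in>bits l. \<Sum>T\<in>subsets. card (fixing y T) * n ^ t)"
    by (simp add: sum_distrib_right)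
  also have "\<dots> \<le> (\<Sum>y\<in>bits l. \<Sum>T\<in>subsets. card (oracles l))"
    using card_oracles_fixing_secrets assms(2,3)
    by (intro sum_mono) (auto simp: subsets_def fixing_def n_def)
  also have "\<dots> = n * (n choose t) * card (oracles l)"
    by (simp add: subsets_def n_subsets card_bits n_def)
  finally have "card ?heavy * n ^ t * fact t \<le> n * ((n choose t) * fact t) * card (oracles l)"
    using mult_le_mono1 by (simp add: ac_simps)
  also have "\<dots> \<le> n * n ^ t * card (oracles l)"
    by (intro mult_le_mono1 mult_le_mono2 binomial_fact_pow)
  finally have "n ^ t * (card ?heavy * fact t) \<le> n ^ t * (n * card (oracles l))"
    by (simp only: ac_simps)
  then show ?thesis
    by (simp add: n_def)
qed

lemma sum_pmf_le_max_fibre: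
  assumes "finite S" "\<And>y. card {s \<in> S. f s = y} \<le> t"
  shows "(\<Sum>s\<in>S. pmf p (f s)) \<le> real t"
proof -
  have "(\<Sum>s\<in>S. pmf p (f s)) = (\<Sum>y\<in>f ` S. real (card {s \<in> S. f s = y}) * pmf p y)"
    by (subst sum.image_gen[OF assms(1)]) (auto intro!: sum.cong)
  also have "\<dots> \<le> (\<Sum>y\<in>f ` S. real t * pmf p y)"
    by (intro sum_mono mult_right_mono) (simp_all add: assms(2))
  also have "\<dots> = real t * measure_pmf.prob p (f ` S)"
    using assms(1) by (simp add: sum_distrib_left measure_measure_pmf_finite)
  also have "\<dots> \<le> real t"
    by (simp add: mult_left_le)
  finally show ?thesis .
qed

lemma expectation_over_secret_le:
  "measure_pmf.expectation (pmf_of_set (bits l)) (\<lambda>s. pmf p (boxplus l x (H (s @ a @ b))))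
     \<le> (if heavy_fibre l t a b x H then 1 else t / 2 ^ l)"
proof (cases "heavy_fibre l t a b x H")
  case True
  then show ?thesis
    by (simp add: expectation_pmf_le_const[where B=1] pmf_le_1)
next
  case False
  then have "(\<Sum>s\<in>bits l. pmf p (boxplus l x (H (s @ a @ b)))) \<le> real t"
    by (intro sum_pmf_le_max_fibre) (auto simp: heavy_fibre_def not_le less_imp_le)
  then show ?thesis
    using False by (simp add: integral_pmf_of_set card_bits divide_right_mono)
qed

lemma expectation_heavy_fibre_le:
  assumes "0 < t" "a \<in> bits l" "b \<in> bits l"
  shows "measure_pmf.expectation (pmf_of_set (oracles l))
           (\<lambda>H. if heavy_fibre l t a b x H then 1 else t / 2 ^ l) \<le> 2 ^ l / fact t + t / 2 ^ l"
proof -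
  let ?O = "oracles l" and ?heavy = "{H \<in> oracles l. heavy_fibre l t a b x H}"
  have "(\<Sum>H\<in>?O. if heavy_fibre l t a b x H then 1 else t / 2 ^ l)
      \<le> (\<Sum>H\<in>?O. of_bool (heavy_fibre l t a b x H) + t / 2 ^ l)"
    by (intro sum_mono) auto
  also have "\<dots> = card ?heavy + card ?O * (t / 2 ^ l)"
    by (simp add: sum.distrib Int_def conj_commute)
  finally have "(\<Sum>H\<in>?O. if heavy_fibre l t a b x H then 1 else t / 2 ^ l) / card ?O
      \<le> (card ?heavy + card ?O * (t / 2 ^ l)) / card ?O"
    by (rule divide_right_mono) simp
  also have "\<dots> = card ?heavy / card ?O + t / 2 ^ l"
    by (simp add: add_divide_distrib card_gt_0_iff)
  finally have "(\<Sum>H\<in>?O. if heavy_fibre l t a b x H then 1 else t / 2 ^ l) / card ?O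
      \<le> card ?heavy / card ?O + t / 2 ^ l" .
  moreover have "real (card ?heavy) * fact t \<le> 2 ^ l * card ?O"
    using card_heavy_fibre[OF assms, of x] by (metis of_nat_fact of_nat_le_iff of_nat_mult of_nat_numeral of_nat_power)
  then have "card ?heavy / card ?O \<le> 2 ^ l / fact t"
    by (simp add: field_simps card_gt_0_iff)
  ultimately show ?thesis
    by (simp add: integral_pmf_of_set)
qed

lemma bind_pmf_move_inward:
  "bind_pmf Or (\<lambda>H. bind_pmf S (\<lambda>s. bind_pmf A (\<lambda>a. bind_pmf B (\<lambda>b. bind_pmf X (\<lambda>x.
     bind_pmf (Z H a b) (\<lambda>z. R H s a b x z))))))
 = bind_pmf A (\<lambda>a. bind_pmf B (\<lambda>b. bind_pmf X (\<lambda>x. bind_pmf Or (\<lambda>H.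
     bind_pmf (Z H a b) (\<lambda>z. bind_pmf S (\<lambda>s. R H s a b x z))))))"
  by (simp add: bind_commute_pmf[of S] bind_commute_pmf[of Or])

text \<open>Drawing the secret last lets us average over it with everything the guesser sees fixed.\<close>

lemma world_pmf_secret_last:
  "world_pmf Z l =
     pmf_of_set (bits l) \<bind> (\<lambda>a. pmf_of_set (bits l) \<bind> (\<lambda>b. pmf_of_set (bits l) \<bind> (\<lambda>x.
     pmf_of_set (oracles l) \<bind> (\<lambda>H. Z l H a b \<bind> (\<lambda>z. pmf_of_set (bits l) \<bind> (\<lambda>s.
     return_pmf \<lparr>orc = H, sec = s, cta = a, ctb = b, chx = x, chz = z\<rparr>))))))"
  unfolding world_pmf_def by (rule bind_pmf_move_inward)

lemma guess_prob_token_without_secret_le: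
  assumes "0 < t"
  shows "guess_prob (world_pmf Z l) (\<lambda>w. (orc w, chx w, chz w)) (\<lambda>w. boxplus l (chx w) (token w)) g
           \<le> 2 ^ l / fact t + t / 2 ^ l"
proof -
  define f where "f w = pmf (g (orc w, chx w, chz w)) (boxplus l (chx w) (token w))" for w
  have f_bounded: "\<bar>f w\<bar> \<le> 1" for w
    by (simp add: f_def pmf_le_1)
  have given_oracle: "measure_pmf.expectation (Z l H a b \<bind> (\<lambda>z. pmf_of_set (bits l) \<bind> (\<lambda>s.
        return_pmf \<lparr>orc = H, sec = s, cta = a, ctb = b, chx = x, chz = z\<rparr>))) f
      \<le> (if heavy_fibre l t a b x H then 1 else t / 2 ^ l)" for H a b x
    by (rule expectation_bind_pmf_le_const[OF f_bounded])
       (simp add: map_pmf_def[symmetric] f_def token_def expectation_over_secret_le)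
  have given_counters: "measure_pmf.expectation (pmf_of_set (oracles l) \<bind> (\<lambda>H. Z l H a b \<bind> (\<lambda>z.
        pmf_of_set (bits l) \<bind> (\<lambda>s. return_pmf \<lparr>orc = H, sec = s, cta = a, ctb = b, chx = x, chz = z\<rparr>)))) f
      \<le> 2 ^ l / fact t + t / 2 ^ l" if "a \<in> bits l" "b \<in> bits l" for a b x
  proof -
    have "measure_pmf.expectation (pmf_of_set (oracles l) \<bind> (\<lambda>H. Z l H a b \<bind> (\<lambda>z.
        pmf_of_set (bits l) \<bind> (\<lambda>s. return_pmf \<lparr>orc = H, sec = s, cta = a, ctb = b, chx = x, chz = z\<rparr>)))) f
      \<le> measure_pmf.expectation (pmf_of_set (oracles l))
           (\<lambda>H. if heavy_fibre l t a b x H then 1 else t / 2 ^ l)"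
      by (subst expectation_bind_pmf[OF f_bounded])
         (rule expectation_pmf_of_set_le, simp_all add: given_oracle)
    also have "\<dots> \<le> 2 ^ l / fact t + t / 2 ^ l"
      by (rule expectation_heavy_fibre_le[OF assms that])
    finally show ?thesis .
  qed
  then show ?thesis
    unfolding guess_prob_def world_pmf_secret_last f_def[symmetric]
    by (intro expectation_bind_pmf_le_const[OF f_bounded] given_counters) simp_all
qed

lemma guess_chance_token_without_secret_le:
  "guess_chance (world_pmf Z l) (\<lambda>w. (orc w, chx w, chz w)) (\<lambda>w. boxplus l (chx w) (token w))
     \<le> (2 * real l + 5) / 2 ^ l"
proof -
  have "(2 :: real) ^ l * 2 ^ l = real (4 ^ l)"
    by (simp flip: power_mult_distrib)
  also have "\<dots> \<le> fact (2 * l + 4)"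
    by (metis four_power_le_fact of_nat_fact of_nat_le_iff)
  finally have "(2 :: real) ^ l / fact (2 * l + 4) \<le> 1 / 2 ^ l"
    by (simp add: field_simps)
  moreover have "1 / 2 ^ l + real (2 * l + 4) / 2 ^ l = (2 * real l + 5) / (2 :: real) ^ l"
    by (simp add: field_simps)
  ultimately have "(2 :: real) ^ l / fact (2 * l + 4) + real (2 * l + 4) / 2 ^ l \<le> (2 * real l + 5) / 2 ^ l"
    by linarith
  then show ?thesis
    by (intro guess_chance_le order.trans[OF guess_prob_token_without_secret_le[of "2 * l + 4"]]) simp_all
qed

lemma negligible_zero: "negligible (\<lambda>l. 0)"
  by (simp add: negligible_def)

lemma negligible_if_le_linear_over_power_2:
  assumes "\<And>l. \<bar>f l\<bar> \<le> (a * real l + b) / 2 ^ l"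
  shows "negligible f"
  unfolding negligible_def
proof
  fix c :: nat
  have "((\<lambda>l::nat. real l ^ c * (a * real l + b) / 2 ^ l) \<longlongrightarrow> 0) sequentially"
    by real_asymp
  then have "\<forall>\<^sub>F l in sequentially. real l ^ c * (a * real l + b) / 2 ^ l < 1"
    by (rule order_tendstoD) simp
  then show "\<forall>\<^sub>F l in sequentially. \<bar>f l\<bar> \<le> inverse (real l ^ c)"
    using eventually_ge_at_top[of 1]
  proof eventually_elim
    case (elim l)
    then have "(a * real l + b) / 2 ^ l \<le> inverse (real l ^ c)"
      by (simp add: field_simps)
    then show ?case
      using assms[of l] by linarith
  qed
qed

lemma abs_diff_half_power_le:
  fixes u :: real
  assumes "0 \<le> u" "u \<le> c / 2 ^ l" "0 \<le> c"
  shows "\<bar>u - (1/2) ^ l\<bar> \<le> (c + 1) / 2 ^ l"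
proof -
  have "(1/2) ^ l = 1 / (2 :: real) ^ l" "0 \<le> 1 / (2 :: real) ^ l"
    by (simp_all add: power_one_over)
  moreover have "(c + 1) / 2 ^ l = c / 2 ^ l + 1 / (2 :: real) ^ l"
    by (simp add: add_divide_distrib)
  moreover have "0 \<le> c / (2 :: real) ^ l"
    using assms(3) by simp
  ultimately show ?thesis
    unfolding abs_le_iff using assms(1,2) by linarith
qed

lemma boxplus_fill_wildcards:
  assumes "length x = l"
  shows "boxplus l (map (case_option c id) (wild x (kernel l h))) h = boxplus l x h"
  using assms by (auto simp: boxplus_def wild_def kernel_def)

lemma length_chx_world:
  assumes "w \<in> set_pmf (world_pmf Z l)"
  shows "length (chx w) = l"
  using assms by (auto simp: world_pmf_def set_pmf_of_set[OF bits_nonempty finite_bits]) (simp add: bits_def)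

theorem lemma6p3:
  fixes Z :: "nat \<Rightarrow> (bool list \<Rightarrow> bool list) \<Rightarrow> bool list \<Rightarrow> bool list \<Rightarrow> bool list pmf"
    and incl_z incl_zh :: bool
  assumes "\<And>l H a b. set_pmf (Z l H a b) \<subseteq> bits l"
  shows
    "negl_eq (\<lambda>l. guess_chance (world_pmf Z l) (\<lambda>w. orc w)
                 (\<lambda>w. boxplus l (chx w) (token w)))
             (\<lambda>l. (1/2) ^ l) \<and>
     negl_eq (\<lambda>l. guess_chance (world_pmf Z l) (\<lambda>w. (orc w, chx w, chz w))
                 (\<lambda>w. boxplus l (chx w) (token w)))
             (\<lambda>l. (1/2) ^ l) \<and>
     negl_eq (\<lambda>l. guess_chance (world_pmf Z l)
                 (\<lambda>w. (orc w, cta w, ctb w, sec w, wild (chx w) (kernel l (token w))))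
                 (\<lambda>w. boxplus l (chx w) (token w)))
             (\<lambda>l. 1) \<and>
     negl_eq (\<lambda>l. guess_chance (world_pmf Z l)
                 (\<lambda>w. (orc w, cta w, ctb w, sec w, chx w,
                       if incl_z then Some (chz w) else None,
                       if incl_zh then Some (boxplus l (chz w) (token w)) else None))
                 (\<lambda>w. boxplus l (chx w) (token w)))
             (\<lambda>l. 1)"
proof -
  let ?target = "\<lambda>l w. boxplus l (chx w) (token w)"
  let ?G = "\<lambda>l. guess_chance (world_pmf Z l) (\<lambda>w. (orc w, chx w, chz w)) (?target l)"
  let ?G\<^sub>H = "\<lambda>l. guess_chance (world_pmf Z l) orc (?target l)"
  have G\<^sub>H_le: "?G\<^sub>H l \<le> (2 * real l + 5) / 2 ^ l" for l
    by (rule order.trans[OF guess_chance_mono_view[of _ fst] guess_chance_token_without_secret_le]) simp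
  have "\<bar>?G l - (1/2) ^ l\<bar> \<le> (2 * real l + 6) / 2 ^ l" for l
    using abs_diff_half_power_le[OF guess_chance_nonneg guess_chance_token_without_secret_le]
    by (simp add: add.assoc)
  moreover have "\<bar>?G\<^sub>H l - (1/2) ^ l\<bar> \<le> (2 * real l + 6) / 2 ^ l" for l
    using abs_diff_half_power_le[OF guess_chance_nonneg G\<^sub>H_le] by (simp add: add.assoc)
  moreover have "guess_chance (world_pmf Z l)
      (\<lambda>w. (orc w, cta w, ctb w, sec w, wild (chx w) (kernel l (token w)))) (?target l) = 1" for l
    by (rule guess_chance_eq_1_if_determined[where
          \<phi> = "\<lambda>(H, a, b, s, x\<^sub>w). boxplus l (map (case_option False id) x\<^sub>w) (H (s @ a @ b))"])
       (simp add: boxplus_fill_wildcards length_chx_world token_def)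
  moreover have "guess_chance (world_pmf Z l)
      (\<lambda>w. (orc w, cta w, ctb w, sec w, chx w,
            if incl_z then Some (chz w) else None,
            if incl_zh then Some (boxplus l (chz w) (token w)) else None)) (?target l) = 1" for l
    by (rule guess_chance_eq_1_if_determined[where \<phi> = "\<lambda>(H, a, b, s, x, _). boxplus l x (H (s @ a @ b))"])
       (simp add: token_def)
  ultimately show ?thesis
    unfolding negl_eq_def
    by (simp add: negligible_zero negligible_if_le_linear_over_power_2[where a=2 and b=6])
qed

end
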